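(* Let $X$ be a topological vector space over $\mathbb{K}$, let $M\subset X$, and let $\alpha\ge\aleph_0$ be a cardinal with $w(X)\le\alpha$. Then $M$ is $\alpha$-dense-lineable if and only if $M$ is $\alpha$-infinitely $\alpha$-dense-lineable.
   Context: The weight $w(X)$ is the smallest cardinality of a base for the topology of $X$. $M$ is $\beta$-dense-lineable if there is a dense linear subspace $Y$ of $X$ with $\dim(Y)=\beta$ and $Y\subset M\cup\{0\}$. For cardinals $\alpha\ge\aleph_0$ and $\beta$, $M$ is $\alpha$-infinitely $\beta$-dense-lineable if there is a family $\{Y_\kappa\}_{\kappa<\alpha}$ of dense linear subspaces of $X$, each of dimension $\beta$, with $Y_\kappa\subset M\cup\{0\}$ for each $\kappa<\alpha$ and $Y_{\kappa_1}\cap Y_{\kappa_2}=\{0\}$ for $\kappa_1\neq\kappa_2$. *)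

theory Defs
  imports "HOL-Analysis.Analysis"
begin

definition tvs :: "('k::{field,topological_space} \<Rightarrow> 'a::{ab_group_add,topological_space} \<Rightarrow> 'a) \<Rightarrow> bool" where
  "tvs sc \<longleftrightarrow> vector_space sc
     \<and> continuous_on UNIV (\<lambda>(x::'a, y::'a). x + y)
     \<and> continuous_on UNIV (\<lambda>(c::'k, x::'a). sc c x)"

definition weight_le :: "'c set \<Rightarrow> 'a::topological_space itself \<Rightarrow> bool" where
  "weight_le A _ \<longleftrightarrow> (\<exists>\<B>::'a set set. topological_basis \<B> \<and> (card_of \<B>, card_of A) \<in> ordLeq)"

definition subspace_of_dim :: "('k::field \<Rightarrow> 'a::ab_group_add \<Rightarrow> 'a) \<Rightarrow> 'a set \<Rightarrow> 'c set \<Rightarrow> bool" where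
  "subspace_of_dim sc Y A \<longleftrightarrow> module.subspace sc Y
     \<and> (\<exists>B. \<not> module.dependent sc B \<and> module.span sc B = Y \<and> (card_of B, card_of A) \<in> ordIso)"

definition dense_lineable ::
  "('k::field \<Rightarrow> 'a::{ab_group_add,topological_space} \<Rightarrow> 'a) \<Rightarrow> 'a set \<Rightarrow> 'c set \<Rightarrow> bool" where
  "dense_lineable sc M A \<longleftrightarrow>
     (\<exists>Y. subspace_of_dim sc Y A \<and> closure Y = UNIV \<and> Y \<subseteq> M \<union> {0})"

definition inf_dense_lineable ::
  "('k::field \<Rightarrow> 'a::{ab_group_add,topological_space} \<Rightarrow> 'a) \<Rightarrow> 'a set \<Rightarrow> 'i set \<Rightarrow> 'c set \<Rightarrow> bool" where
  "inf_dense_lineable sc M I A \<longleftrightarrow>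
     (\<exists>Y :: 'i \<Rightarrow> 'a set.
        (\<forall>\<kappa>\<in>I. subspace_of_dim sc (Y \<kappa>) A \<and> closure (Y \<kappa>) = UNIV \<and> Y \<kappa> \<subseteq> M \<union> {0})
      \<and> (\<forall>\<kappa>1\<in>I. \<forall>\<kappa>2\<in>I. \<kappa>1 \<noteq> \<kappa>2 \<longrightarrow> Y \<kappa>1 \<inter> Y \<kappa>2 = {0}))"

end

theory Submission
  imports Defs
begin

(* Let Y be a dense subspace with a basis of cardinality alpha >= w(X). If S is a subset of Y
   with |S| < alpha and U is open and nonempty, then Y \<inter> U is not contained in span S:
   otherwise, for y0 in Y \<inter> U and y in Y, the vector y0 + t y lies in U for some scalar t \<noteq> 0,
   so Y would be spanned by S \<union> {y0}, a set of cardinality < alpha.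
   Enumerate the pairs (k, U), k ranging over a set of cardinality alpha and U over a base of
   cardinality <= alpha, along a well-order of type alpha, and choose f(k, U) in Y \<inter> U outside
   the span of all earlier choices. The chosen vectors are independent, so the spans Y_k of
   {f(k, U)}_U are dense subspaces of Y of dimension alpha that pairwise meet only in 0. *)

unbundle cardinal_syntax

lemma card_of_ordLess_infinite_if_finite: "finite A \<Longrightarrow> infinite B \<Longrightarrow> |A| <o |B|"
  by (rule finite_ordLess_infinite[OF card_of_Well_order card_of_Well_order]) (auto simp: Field_card_of)

context vector_space
begin

lemma independent_if_not_in_span_underS:
  assumes wo: "Well_order r" and new: "\<And>i. i \<in> Field r \<Longrightarrow> f i \<notin> span (f ` underS r i)"
  shows "inj_on f (Field r)" and "independent (f ` Field r)"
proof -
  interpret r: wo_rel r using wo by (rule wo_rel.intro)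
  show "inj_on f (Field r)"
  proof (rule inj_onI, rule ccontr)
    fix i j assume ij: "i \<in> Field r" "j \<in> Field r" "f i = f j" "i \<noteq> j"
    have "f a \<noteq> f b" if "a \<in> Field r" "b \<in> underS r a" for a b
      using new[OF that(1)] span_base that(2) by blast
    with ij r.TOTALS show False by (metis underS_I)
  qed
  have ofilter_indep: "independent (f ` B)"
    if "r.ofilter B" "\<And>i. i \<in> B \<Longrightarrow> independent (f ` under r i)" for B
  proof -
    have "f ` B = (\<Union>i\<in>B. f ` under r i)"
      using r.ofilter_under_UNION[OF that(1)] by blast
    moreover have "independent (\<Union>i\<in>B. f ` under r i)"
    proof (rule independent_Union_directed)
      show "c \<subseteq> d \<or> d \<subseteq> c"
        if "c \<in> (\<lambda>i. f ` under r i) ` B" "d \<in> (\<lambda>i. f ` under r i) ` B" for c d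
        using that r.ofilter_linord[OF r.under_ofilter r.under_ofilter] by (blast dest: image_mono)
    qed (use that in auto)
    ultimately show ?thesis by simp
  qed
  have "independent (f ` under r i)" for i
  proof (induction i rule: r.well_order_induct)
    case (1 i)
    show ?case
    proof (cases "i \<in> Field r")
      case True
      have "independent (f ` underS r i)"
        by (rule ofilter_indep[OF r.underS_ofilter]) (use 1 in \<open>auto simp: underS_def\<close>)
      then show ?thesis
        using independent_insertI[OF new[OF True]] r.REFL Refl_under_underS[OF _ True] by simp
    next
      case False
      then have "under r i = {}" by (auto simp: under_def Field_def)
      then show ?thesis by (simp add: independent_empty)
    qed
  qed
  then show "independent (f ` Field r)"
    using ofilter_indep[OF r.Field_ofilter] by blast
qed

lemma independent_choice_avoiding_small_spans:
  assumes avoid: "\<And>i S. i \<in> I \<Longrightarrow> S \<subseteq> Y \<Longrightarrow> |S| <o |I| \<Longrightarrow> \<exists>y\<in>Y \<inter> C i. y \<notin> span S"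
  obtains f where "inj_on f I" "independent (f ` I)" "\<And>i. i \<in> I \<Longrightarrow> f i \<in> Y \<inter> C i"
proof -
  let ?r = "|I|"
  interpret r: wo_rel ?r by (rule wo_rel.intro) (rule card_of_Well_order)
  define H where "H g i = (SOME y. y \<in> Y \<inter> C i \<and> y \<notin> span (g ` underS ?r i))" for g i
  define f where "f = r.worec H"
  have "r.adm_wo H"
    unfolding r.adm_wo_def H_def by (simp cong: image_cong)
  then have fixpoint: "f = H f"
    unfolding f_def by (rule r.worec_fixpoint)
  have f_eq: "f i = (SOME y. y \<in> Y \<inter> C i \<and> y \<notin> span (f ` underS ?r i))" for i
    using fun_cong[OF fixpoint, of i] unfolding H_def .
  have "i \<in> I \<longrightarrow> f i \<in> Y \<inter> C i \<and> f i \<notin> span (f ` underS ?r i)" for i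
  proof (induction i rule: r.well_order_induct)
    case (1 i)
    show ?case
    proof
      assume i: "i \<in> I"
      have "f ` underS ?r i \<subseteq> Y"
        using 1 FieldI1[of _ i ?r] by (auto simp: underS_def Field_card_of)
      moreover have "|f ` underS ?r i| <o |I|"
        using card_of_underS[OF card_of_Card_order, of i I] i
        by (metis Field_card_of card_of_image ordLeq_ordLess_trans)
      ultimately obtain y where "y \<in> Y \<inter> C i \<and> y \<notin> span (f ` underS ?r i)"
        using avoid[OF i] by blast
      then show "f i \<in> Y \<inter> C i \<and> f i \<notin> span (f ` underS ?r i)"
        unfolding f_eq[of i] by (rule someI)
    qed
  qed
  then show thesis
    using that independent_if_not_in_span_underS[OF card_of_Well_order, of I f]
    by (simp add: Field_card_of)
qed

lemma in_span_imp_in_span_finite_subset: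
  assumes "x \<in> span S"
  obtains F where "finite F" "F \<subseteq> S" "x \<in> span F"
proof -
  obtain F c where "finite F" "F \<subseteq> S" "x = (\<Sum>a\<in>F. c a *s a)"
    using assms by (auto simp: span_explicit)
  then show thesis
    by (intro that[of F]) (auto intro!: span_sum span_scale intro: span_base)
qed

lemma independent_card_of_ordLeq_spanning:
  assumes E: "independent E" "infinite E" and ET: "E \<subseteq> span T" and TE: "T \<subseteq> span E"
  shows "|E| \<le>o |T|"
proof -
  have T: "infinite T"
    using independent_span_bound[OF _ E(1) ET] E(2) by blast
  have "\<forall>t\<in>T. \<exists>F. finite F \<and> F \<subseteq> E \<and> t \<in> span F"
    using in_span_imp_in_span_finite_subset TE by (metis subsetD)
  then obtain F where F: "\<And>t. t \<in> T \<Longrightarrow> finite (F t) \<and> F t \<subseteq> E \<and> t \<in> span (F t)"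
    by metis
  have "E \<subseteq> (\<Union>t\<in>T. F t)"
  proof
    fix e assume e: "e \<in> E"
    show "e \<in> (\<Union>t\<in>T. F t)"
    proof (rule ccontr)
      assume "e \<notin> (\<Union>t\<in>T. F t)"
      then have "F t \<subseteq> E - {e}" if "t \<in> T" for t
        using F that by blast
      then have "T \<subseteq> span (E - {e})"
        using F span_mono by blast
      then have "span T \<subseteq> span (E - {e})"
        by (simp add: span_minimal)
      then show False
        using E(1) e ET by (auto simp: dependent_def)
    qed
  qed
  moreover have "|\<Union>t\<in>T. F t| \<le>o |T|"
    using F T by (intro card_of_UNION_ordLeq_infinite[OF T ordIso_imp_ordLeq[OF card_of_refl]])
      (auto intro: ordLess_imp_ordLeq card_of_ordLess_infinite_if_finite)
  ultimately show ?thesis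
    using card_of_mono1 ordLeq_transitive by blast
qed

lemma span_Int_span_disjoint_subsets:
  assumes B: "independent B" and S: "S1 \<subseteq> B" "S2 \<subseteq> B" "S1 \<inter> S2 = {}"
  shows "span S1 \<inter> span S2 = {0}"
proof -
  have "x = 0" if x: "x \<in> span S1" "x \<in> span S2" for x
  proof -
    have zero: "representation B x b = 0" for b
      using representation_extend[OF B x(1) S(1)] representation_extend[OF B x(2) S(2)]
        representation_ne_zero[of S1 x b] representation_ne_zero[of S2 x b] S(3) by auto
    have "x \<in> span B"
      using x(1) span_mono[OF S(1)] by blast
    then have "x = (\<Sum>b\<in>{b. representation B x b \<noteq> 0}. representation B x b *s b)"
      using sum_nonzero_representation_eq[OF B] by simp
    also have "\<dots> = 0"
      by (simp add: zero)
    finally show "x = 0" .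
  qed
  then show ?thesis by (auto simp: span_zero)
qed

end

lemma tvs_continuous_on_line:
  fixes sc :: "'k::{field,topological_space} \<Rightarrow> 'a::{ab_group_add,topological_space} \<Rightarrow> 'a"
  assumes "tvs sc"
  shows "continuous_on UNIV (\<lambda>t. x + sc t y)"
proof -
  have add: "continuous_on UNIV (\<lambda>(u::'a, v). u + v)"
    and scale: "continuous_on UNIV (\<lambda>(c::'k, v). sc c v)"
    using assms by (auto simp: tvs_def)
  have "continuous_on UNIV (\<lambda>t. sc t y)"
    using continuous_on_compose2[OF scale, of UNIV "\<lambda>t. (t, y)"] by (simp add: continuous_on_Pair)
  then show ?thesis
    using continuous_on_compose2[OF add, of UNIV "\<lambda>t. (x, sc t y)"] by (simp add: continuous_on_Pair)
qed

lemma open_part_spans_subspace: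
  fixes sc :: "'k::{field,perfect_space} \<Rightarrow> 'a::{ab_group_add,topological_space} \<Rightarrow> 'a"
  assumes tvs: "tvs sc" and Y: "module.subspace sc Y" and U: "open U" "y0 \<in> Y \<inter> U"
    and YU: "Y \<inter> U \<subseteq> module.span sc S"
  shows "Y \<subseteq> module.span sc (insert y0 S)"
proof
  interpret vector_space sc using tvs by (simp add: tvs_def)
  fix y assume y: "y \<in> Y"
  let ?W = "(\<lambda>t. y0 + sc t y) -` U"
  have "open ?W"
    using open_vimage[OF U(1) tvs_continuous_on_line[OF tvs]] by simp
  then have "?W \<noteq> {0}"
    by (metis not_open_singleton)
  moreover have "0 \<in> ?W"
    using U(2) by simp
  ultimately obtain t where t: "t \<in> ?W" "t \<noteq> 0"
    by blast
  have "y0 + sc t y \<in> Y"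
    using Y y U(2) by (simp add: subspace_add subspace_scale)
  then have "y0 + sc t y \<in> span (insert y0 S)"
    using YU t(1) span_mono[of S "insert y0 S"] by auto
  then have "sc t y \<in> span (insert y0 S)"
    using span_add_eq span_base[of y0 "insert y0 S"] by blast
  then have "sc (inverse t) (sc t y) \<in> span (insert y0 S)"
    by (rule span_scale)
  then show "y \<in> span (insert y0 S)"
    using t(2) by simp
qed

lemma dense_subspace_meets_open_outside_small_span:
  fixes sc :: "'k::{field,perfect_space} \<Rightarrow> 'a::{ab_group_add,topological_space} \<Rightarrow> 'a"
  assumes tvs: "tvs sc" and Y: "module.subspace sc Y" "closure Y = UNIV"
    and E: "\<not> module.dependent sc E" "module.span sc E = Y" "infinite E"
    and S: "S \<subseteq> Y" "|S| <o |E|" and U: "open U" "U \<noteq> {}"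
  shows "\<exists>y\<in>Y \<inter> U. y \<notin> module.span sc S"
proof (rule ccontr)
  interpret vector_space sc using tvs by (simp add: tvs_def)
  assume "\<not> (\<exists>y\<in>Y \<inter> U. y \<notin> span S)"
  then have YU: "Y \<inter> U \<subseteq> span S"
    by blast
  obtain y0 where y0: "y0 \<in> Y \<inter> U"
    using open_Int_closure_eq_empty[OF U(1), of Y] U(2) Y(2) by auto
  have "Y \<subseteq> span (insert y0 S)"
    by (rule open_part_spans_subspace[OF tvs Y(1) U(1) y0 YU])
  then have "|E| \<le>o |insert y0 S|"
    using E S y0 span_superset[of E] by (intro independent_card_of_ordLeq_spanning) auto
  moreover have "|insert y0 S| <o |E|"
    using card_of_Un_ordLess_infinite[OF E(3) card_of_ordLess_infinite_if_finite S(2), of "{y0}"] E(3)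
    by simp
  ultimately show False
    using not_ordLess_ordLeq by blast
qed

lemma closure_eq_UNIV_if_meets_basis:
  assumes B: "topological_basis B" and meets: "\<And>U. U \<in> B \<Longrightarrow> U \<noteq> {} \<Longrightarrow> U \<inter> D \<noteq> {}"
  shows "closure D = UNIV"
proof -
  have "x \<in> closure D" for x
  proof (rule ccontr)
    assume "x \<notin> closure D"
    then obtain U where "U \<in> B" "x \<in> U" "U \<subseteq> - closure D"
      using topological_basisE[OF B, of "- closure D" x] by auto
    then show False
      using meets[of U] closure_subset by blast
  qed
  then show ?thesis
    by auto
qed

lemma dense_subspace_independent_family_meeting_basis:
  fixes sc :: "'k::{field,perfect_space} \<Rightarrow> 'a::{ab_group_add,topological_space} \<Rightarrow> 'a"
    and A :: "'c set"
  assumes tvs: "tvs sc" and Y: "module.subspace sc Y" "closure Y = UNIV"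
    and E: "\<not> module.dependent sc E" "module.span sc E = Y" "|E| =o |A|" and A: "infinite A"
    and B: "topological_basis B" "|B| \<le>o |A|"
  obtains f where "inj_on f (A \<times> A)" "\<not> module.dependent sc (f ` (A \<times> A))" "f ` (A \<times> A) \<subseteq> Y"
    "\<And>k U. k \<in> A \<Longrightarrow> U \<in> B \<Longrightarrow> U \<noteq> {} \<Longrightarrow> \<exists>b\<in>A. f (k, b) \<in> U"
proof -
  interpret vector_space sc using tvs by (simp add: tvs_def)
  have "B - {{}} \<noteq> {}"
    using topological_basisE[OF B(1) open_UNIV] by blast
  moreover have "|B - {{}}| \<le>o |A|"
    using card_of_mono1[of "B - {{}}" B] B(2) ordLeq_transitive by blast
  ultimately obtain \<sigma> where \<sigma>: "\<sigma> ` A = B - {{}}"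
    using card_of_ordLeq2 by metis
  have "infinite E"
    using card_of_ordIso_finite[OF E(3)] A by blast
  have small: "|S| <o |E|" if "|S| <o |A \<times> A|" for S :: "'a set"
    using that card_of_Times_same_infinite[OF A] E(3)
    by (metis ordIso_symmetric ordIso_transitive ordLess_ordIso_trans)
  have avoid: "\<exists>y\<in>Y \<inter> \<sigma> (snd i). y \<notin> span S"
    if "i \<in> A \<times> A" "S \<subseteq> Y" "|S| <o |A \<times> A|" for i S
  proof -
    have "\<sigma> (snd i) \<in> B - {{}}"
      using \<sigma> that(1) by (metis imageI mem_Times_iff)
    then show ?thesis
      using dense_subspace_meets_open_outside_small_span[OF tvs Y E(1,2) \<open>infinite E\<close> that(2)
          small[OF that(3)]] topological_basis_open[OF B(1)] by blast
  qed
  obtain f where f: "inj_on f (A \<times> A)" "independent (f ` (A \<times> A))"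
    "\<And>i. i \<in> A \<times> A \<Longrightarrow> f i \<in> Y \<inter> \<sigma> (snd i)"
    using independent_choice_avoiding_small_spans[of "A \<times> A" Y "\<lambda>i. \<sigma> (snd i)"] avoid by blast
  have "\<exists>b\<in>A. f (k, b) \<in> U" if "k \<in> A" "U \<in> B" "U \<noteq> {}" for k U
  proof -
    have "U \<in> \<sigma> ` A"
      using \<sigma> that(2,3) by simp
    then show ?thesis
      using f(3) that(1) by fastforce
  qed
  then show thesis
    using that f by blast
qed

lemma inf_dense_lineable_if_independent_family_meeting_basis:
  fixes sc :: "'k::field \<Rightarrow> 'a::{ab_group_add,topological_space} \<Rightarrow> 'a"
    and A :: "'c set"
  assumes "vector_space sc" and Y: "module.subspace sc Y" "Y \<subseteq> M \<union> {0}"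
    and f: "inj_on f (A \<times> A)" "\<not> module.dependent sc (f ` (A \<times> A))" "f ` (A \<times> A) \<subseteq> Y"
    and B: "topological_basis B"
    and meets: "\<And>k U. k \<in> A \<Longrightarrow> U \<in> B \<Longrightarrow> U \<noteq> {} \<Longrightarrow> \<exists>b\<in>A. f (k, b) \<in> U"
  shows "inf_dense_lineable sc M A A"
proof -
  interpret vector_space sc by fact
  define Z where "Z k = span (f ` ({k} \<times> A))" for k
  have dim: "subspace_of_dim sc (Z k) A" if k: "k \<in> A" for k
    unfolding subspace_of_dim_def Z_def
  proof (intro conjI exI[of _ "f ` ({k} \<times> A)"] subspace_span refl)
    show "independent (f ` ({k} \<times> A))"
      using k by (intro independent_mono[OF f(2)]) auto
    have "bij_betw (\<lambda>a. f (k, a)) A (f ` ({k} \<times> A))"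
      using f(1) k by (auto simp: bij_betw_def inj_on_def)
    then show "|f ` ({k} \<times> A)| =o |A|"
      using card_of_ordIso[of A "f ` ({k} \<times> A)"] ordIso_symmetric by blast
  qed
  have dense: "closure (Z k) = UNIV" if k: "k \<in> A" for k
  proof (rule closure_eq_UNIV_if_meets_basis[OF B])
    fix U assume "U \<in> B" "U \<noteq> {}"
    then obtain b where b: "b \<in> A" "f (k, b) \<in> U"
      using meets k by blast
    moreover have "f (k, b) \<in> Z k"
      unfolding Z_def using b(1) by (intro span_base imageI) simp
    ultimately show "U \<inter> Z k \<noteq> {}"
      by blast
  qed
  have sub: "Z k \<subseteq> M \<union> {0}" if k: "k \<in> A" for k
  proof -
    have "Z k \<subseteq> Y"
      unfolding Z_def using f(3) k Y(1) by (intro span_minimal) auto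
    then show ?thesis
      using Y(2) by blast
  qed
  have disj: "Z k1 \<inter> Z k2 = {0}" if k: "k1 \<in> A" "k2 \<in> A" "k1 \<noteq> k2" for k1 k2
  proof -
    have "f ` ({k1} \<times> A) \<inter> f ` ({k2} \<times> A) = f ` ({k1} \<times> A \<inter> {k2} \<times> A)"
      using k by (intro inj_on_image_Int[OF f(1), symmetric]) auto
    also have "\<dots> = {}"
      using k(3) by blast
    finally show ?thesis
      unfolding Z_def using k by (intro span_Int_span_disjoint_subsets[OF f(2)]) auto
  qed
  show ?thesis
    unfolding inf_dense_lineable_def
    by (intro exI[of _ Z]) (use dim dense sub disj in blast)
qed

lemma dense_lineable_imp_inf_dense_lineable:
  fixes sc :: "'k::{field,perfect_space} \<Rightarrow> 'a::{ab_group_add,topological_space} \<Rightarrow> 'a"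
    and A :: "'c set"
  assumes tvs: "tvs sc" and A: "infinite A" and w: "weight_le A TYPE('a)"
    and "dense_lineable sc M A"
  shows "inf_dense_lineable sc M A A"
proof -
  obtain Y E where Y: "module.subspace sc Y" "closure Y = UNIV" "Y \<subseteq> M \<union> {0}"
    and E: "\<not> module.dependent sc E" "module.span sc E = Y" "|E| =o |A|"
    using assms(4) by (auto simp: dense_lineable_def subspace_of_dim_def)
  obtain B :: "'a set set" where B: "topological_basis B" "|B| \<le>o |A|"
    using w by (auto simp: weight_le_def)
  obtain f where "inj_on f (A \<times> A)" "\<not> module.dependent sc (f ` (A \<times> A))" "f ` (A \<times> A) \<subseteq> Y"
    "\<And>k U. k \<in> A \<Longrightarrow> U \<in> B \<Longrightarrow> U \<noteq> {} \<Longrightarrow> \<exists>b\<in>A. f (k, b) \<in> U"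
    using dense_subspace_independent_family_meeting_basis[OF tvs Y(1,2) E A B] by blast
  moreover have "vector_space sc"
    using tvs by (simp add: tvs_def)
  ultimately show ?thesis
    using inf_dense_lineable_if_independent_family_meeting_basis[OF _ Y(1,3) _ _ _ B(1)] by blast
qed

lemma inf_dense_lineable_imp_dense_lineable:
  "inf_dense_lineable sc M I A \<Longrightarrow> I \<noteq> {} \<Longrightarrow> dense_lineable sc M A"
  by (auto simp: inf_dense_lineable_def dense_lineable_def)

lemma dense_lineable_iff_inf_dense_lineable:
  fixes sc :: "'k::{field,perfect_space} \<Rightarrow> 'a::{ab_group_add,topological_space} \<Rightarrow> 'a"
    and A :: "'c set"
  assumes "tvs sc" "infinite A" "weight_le A TYPE('a)"
  shows "dense_lineable sc M A \<longleftrightarrow> inf_dense_lineable sc M A A"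
  using assms dense_lineable_imp_inf_dense_lineable inf_dense_lineable_imp_dense_lineable
  by (metis finite.emptyI)

theorem theorem3p2:
  shows "(\<forall>(sc :: real \<Rightarrow> 'a::{ab_group_add,topological_space} \<Rightarrow> 'a) (M :: 'a set) (A :: 'c set).
            tvs sc \<and> infinite A \<and> weight_le A TYPE('a) \<longrightarrow>
            (dense_lineable sc M A \<longleftrightarrow> inf_dense_lineable sc M A A))
       \<and> (\<forall>(sc :: complex \<Rightarrow> 'b::{ab_group_add,topological_space} \<Rightarrow> 'b) (M :: 'b set) (A :: 'd set).
            tvs sc \<and> infinite A \<and> weight_le A TYPE('b) \<longrightarrow>
            (dense_lineable sc M A \<longleftrightarrow> inf_dense_lineable sc M A A))"
  by (intro conjI allI impI) (simp_all add: dense_lineable_iff_inf_dense_lineable)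

end
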